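(* If $n$ is a non-negative integer and $x$ is a complex number, then $$\sum_{k = 1}^n \sum_{j = 0}^{k - 1} \binom{n}{j} \frac{x^{n - j}}{k - j} = (1 + x)^n H_n - \sum_{k = 1}^n \frac{(1 + x)^{n - k}}{k}.$$ In particular, $$\sum_{k = 1}^n \sum_{j = 0}^{k - 1} \frac{\binom{n}{j}}{k - j} = 2^n \left(H_n - \sum_{k = 1}^n \frac{1}{2^k k} \right).$$
   Context: $H_n=\sum_{m=1}^n\frac1m$. Empty sums are zero. *)

theory Defs
  imports "HOL-Analysis.Analysis"
begin

end

(*
  Exchanging the order of summation turns each inner sum into a harmonic number,
  so the double sum equals B n = (\<Sum>m\<le>n. (n choose m) x^m H_m).  Pascal's rule,
  together with the termwise integral (\<Sum>i\<le>n. (n choose i) x^(i+1)/(i+1))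
  = ((1+x)^(n+1) - 1)/(n+1), gives the recurrence
    B (n+1) = (1+x) B n + ((1+x)^(n+1) - 1)/(n+1),  B 0 = 0,
  which the right-hand side satisfies as well.  The second identity is the case x = 1.
*)
theory Submission
  imports Defs
begin

lemma sum_inverse_diff_eq_harm:
  "(\<Sum>k=Suc j..n. 1 / of_nat (k - j)) = (harm (n - j) :: 'a :: real_normed_field)"
proof (cases "j \<le> n")
  case True
  have "(\<Sum>k=Suc j..n. 1 / of_nat (k - j)) = (\<Sum>k=1+j..(n-j)+j. 1 / (of_nat (k - j) :: 'a))"
    using True by simp
  also have "\<dots> = harm (n - j)"
    unfolding sum.shift_bounds_cl_nat_ivl harm_def by (simp add: divide_inverse)
  finally show ?thesis .
qed (simp add: harm_def)

lemma sum_triangle_eq_sum_binomial_harm: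
  fixes x :: "'a :: real_normed_field"
  shows "(\<Sum>k=1..n. \<Sum>j=0..k-1. of_nat (n choose j) * x ^ (n - j) / of_nat (k - j))
       = (\<Sum>m\<le>n. of_nat (n choose m) * x ^ m * harm m)"
proof -
  have "(\<Sum>k=1..n. \<Sum>j=0..k-1. of_nat (n choose j) * x ^ (n - j) / of_nat (k - j))
      = (\<Sum>k=0..n. \<Sum>j=0..<k. of_nat (n choose j) * x ^ (n - j) / of_nat (k - j))"
    \<comment> \<open>{0..k-1} is {0..<k} only for k \<ge> 1 (truncated subtraction); the new k = 0 term is empty\<close>
    by (rule sum.mono_neutral_cong_left) (auto simp: atLeastLessThanSuc_atLeastAtMost[symmetric])
  also have "\<dots> = (\<Sum>j=0..<n. of_nat (n choose j) * x ^ (n - j) * (\<Sum>k=Suc j..n. 1 / of_nat (k - j)))"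
    by (simp add: sum.nested_swap sum_distrib_left)
  also have "\<dots> = (\<Sum>j\<le>n. of_nat (n choose j) * x ^ (n - j) * harm (n - j))"
    by (simp only: sum_inverse_diff_eq_harm) (simp add: atLeast0LessThan lessThan_Suc_atMost[symmetric] harm_def)
  also have "\<dots> = (\<Sum>m\<le>n. of_nat (n choose m) * x ^ m * harm m)"
    by (subst sum.atLeastAtMost_rev[of _ 0, simplified atLeast0AtMost])
       (simp add: binomial_symmetric[symmetric])
  finally show ?thesis .
qed

lemma sum_binomial_power_Suc_div:
  fixes x :: "'a :: field_char_0"
  shows "(\<Sum>i\<le>n. of_nat (n choose i) * x ^ Suc i / of_nat (Suc i))
       = ((1 + x) ^ Suc n - 1) / of_nat (Suc n)"
proof -
  have binomial: "(1 + x) ^ Suc n = 1 + (\<Sum>i\<le>n. of_nat (Suc n choose Suc i) * x ^ Suc i)"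
  proof -
    have "(1 + x) ^ Suc n = (\<Sum>k\<le>Suc n. of_nat (Suc n choose k) * x ^ k)"
      using binomial_ring[of x 1 "Suc n"] by (simp add: add.commute)
    also have "\<dots> = 1 + (\<Sum>i\<le>n. of_nat (Suc n choose Suc i) * x ^ Suc i)"
      by (simp only: sum.atMost_Suc_shift) simp
    finally show ?thesis .
  qed
  have termwise: "of_nat (n choose i) * x ^ Suc i / of_nat (Suc i)
      = of_nat (Suc n choose Suc i) * x ^ Suc i / (of_nat (Suc n) :: 'a)" for i
  proof -
    have "of_nat (Suc n) * of_nat (n choose i) = (of_nat (Suc n choose Suc i) * of_nat (Suc i) :: 'a)"
      by (simp only: Suc_times_binomial_eq flip: of_nat_mult)
    then show ?thesis
      by (simp add: field_simps del: of_nat_Suc binomial_Suc_Suc)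
  qed
  show ?thesis
    by (simp only: termwise binomial add_diff_cancel_left' sum_divide_distrib)
qed

lemma sum_choose_Suc_Pascal:
  fixes g :: "nat \<Rightarrow> 'a :: comm_semiring_1"
  shows "(\<Sum>m\<le>Suc n. of_nat (Suc n choose m) * g m)
       = (\<Sum>m\<le>n. of_nat (n choose m) * g m) + (\<Sum>m\<le>n. of_nat (n choose m) * g (Suc m))"
proof -
  have "(\<Sum>m\<le>Suc n. of_nat (Suc n choose m) * g m)
      = g 0 + (\<Sum>m\<le>n. of_nat (n choose Suc m) * g (Suc m)) + (\<Sum>m\<le>n. of_nat (n choose m) * g (Suc m))"
    by (simp only: sum.atMost_Suc_shift binomial_Suc_Suc) (simp add: sum.distrib distrib_right add_ac)
  also have "g 0 + (\<Sum>m\<le>n. of_nat (n choose Suc m) * g (Suc m)) = (\<Sum>m\<le>n. of_nat (n choose m) * g m)"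
    using sum.atMost_Suc_shift[of "\<lambda>m. of_nat (n choose m) * g m" n] by (simp add: binomial_eq_0)
  finally show ?thesis .
qed

lemma sum_binomial_harm_Suc:
  fixes x :: "'a :: real_normed_field"
  shows "(\<Sum>m\<le>Suc n. of_nat (Suc n choose m) * x ^ m * harm m)
       = (1 + x) * (\<Sum>m\<le>n. of_nat (n choose m) * x ^ m * harm m)
         + ((1 + x) ^ Suc n - 1) / of_nat (Suc n)"
proof -
  have harm_step: "x ^ Suc m * harm (Suc m) = x * (x ^ m * harm m) + x ^ Suc m / of_nat (Suc m)" for m
    by (simp add: harm_Suc field_simps del: of_nat_Suc)
  have "(\<Sum>m\<le>Suc n. of_nat (Suc n choose m) * x ^ m * harm m)
      = (\<Sum>m\<le>n. of_nat (n choose m) * (x ^ m * harm m))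
        + (\<Sum>m\<le>n. of_nat (n choose m) * (x ^ Suc m * harm (Suc m)))"
    by (simp only: mult.assoc sum_choose_Suc_Pascal)
  also have "(\<Sum>m\<le>n. of_nat (n choose m) * (x ^ Suc m * harm (Suc m)))
      = x * (\<Sum>m\<le>n. of_nat (n choose m) * (x ^ m * harm m))
        + (\<Sum>m\<le>n. of_nat (n choose m) * x ^ Suc m / of_nat (Suc m))"
    unfolding sum_distrib_left sum.distrib[symmetric]
    by (intro sum.cong refl) (simp only: harm_step distrib_left mult.left_commute times_divide_eq_right)
  finally show ?thesis
    by (simp only: sum_binomial_power_Suc_div mult.assoc distrib_right mult_1_left add.assoc)
qed

lemma sum_binomial_harm_closed_form:
  fixes x :: "'a :: real_normed_field"
  shows "(\<Sum>m\<le>n. of_nat (n choose m) * x ^ m * harm m)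
       = (1 + x) ^ n * harm n - (\<Sum>k=1..n. (1 + x) ^ (n - k) / of_nat k)"
proof (induction n)
  case 0
  show ?case by (simp add: harm_def)
next
  case (Suc n)
  have shift: "(\<Sum>k=1..Suc n. (1 + x) ^ (Suc n - k) / of_nat k)
      = (1 + x) * (\<Sum>k=1..n. (1 + x) ^ (n - k) / of_nat k) + 1 / of_nat (Suc n)"
    by (simp add: sum_distrib_left Suc_diff_le mult.assoc)
  have "(\<Sum>m\<le>Suc n. of_nat (Suc n choose m) * x ^ m * harm m)
      = (1 + x) * ((1 + x) ^ n * harm n - (\<Sum>k=1..n. (1 + x) ^ (n - k) / of_nat k))
        + ((1 + x) ^ Suc n - 1) / of_nat (Suc n)"
    by (simp only: sum_binomial_harm_Suc Suc.IH)
  also have "\<dots> = (1 + x) ^ Suc n * harm (Suc n) - (\<Sum>k=1..Suc n. (1 + x) ^ (Suc n - k) / of_nat k)"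
    unfolding shift harm_Suc by (simp add: divide_inverse algebra_simps del: of_nat_Suc)
  finally show ?case .
qed

theorem proposition15:
  fixes n :: nat and x :: complex
  shows "((\<Sum>k=1..n. \<Sum>j=0..k-1. of_nat (n choose j) * x ^ (n - j) / of_nat (k - j))
           = (1 + x) ^ n * harm n - (\<Sum>k=1..n. (1 + x) ^ (n - k) / of_nat k)) \<and>
         ((\<Sum>k=1..n. \<Sum>j=0..k-1. of_nat (n choose j) / of_nat (k - j) :: complex)
           = 2 ^ n * (harm n - (\<Sum>k=1..n. 1 / (2 ^ k * of_nat k))))"
proof
  show "(\<Sum>k=1..n. \<Sum>j=0..k-1. of_nat (n choose j) * x ^ (n - j) / of_nat (k - j))
      = (1 + x) ^ n * harm n - (\<Sum>k=1..n. (1 + x) ^ (n - k) / of_nat k)"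
    unfolding sum_triangle_eq_sum_binomial_harm by (rule sum_binomial_harm_closed_form)
next
  have "(\<Sum>k=1..n. \<Sum>j=0..k-1. of_nat (n choose j) / of_nat (k - j) :: complex)
      = 2 ^ n * harm n - (\<Sum>k=1..n. 2 ^ (n - k) / of_nat k)"
    using sum_triangle_eq_sum_binomial_harm[of n "1 :: complex"]
          sum_binomial_harm_closed_form[of n "1 :: complex"]
    by simp
  also have "(\<Sum>k=1..n. 2 ^ (n - k) / of_nat k) = 2 ^ n * (\<Sum>k=1..n. 1 / (2 ^ k * of_nat k) :: complex)"
    unfolding sum_distrib_left by (intro sum.cong refl) (simp add: power_diff)
  finally show "(\<Sum>k=1..n. \<Sum>j=0..k-1. of_nat (n choose j) / of_nat (k - j) :: complex)
      = 2 ^ n * (harm n - (\<Sum>k=1..n. 1 / (2 ^ k * of_nat k)))"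
    by (simp only: right_diff_distrib)
qed

end
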